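(* For $g\ge3$, the inflation map $H^2(\mathfrak H,A)\to H^2(\mathsf{Sp}(2g,\mathbb Z/4),A)$ is injective for every abelian group $A$ with trivial action.
   Context: $\mathsf{Sp}(2g,R)$ is the group of $2g\times2g$ matrices over $R$ with $X^tJX=J$, $J=\begin{pmatrix}0&I\\-I&0\end{pmatrix}$. The kernel of $\mathsf{Sp}(2g,\mathbb Z/4)\to\mathsf{Sp}(2g,2)$ consists of matrices $\begin{pmatrix}I+2\mathrm a&2\mathrm b\\2\mathrm c&I-2\mathrm a^t\end{pmatrix}$ with $\mathrm b,\mathrm c$ symmetric (entries mod $2$). $Y$ is the normal subgroup of those with $\mathsf{Diag}(\mathrm b)=\mathsf{Diag}(\mathrm c)=0$ and $\mathsf{Tr}(\mathrm a)=0$ mod $2$, and $\mathfrak H=\mathsf{Sp}(2g,\mathbb Z/4)/Y$. *)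

theory Defs
  imports "Jordan_Normal_Form.Matrix" "HOL-Library.Numeral_Type" "HOL-Algebra.Coset"
begin

text \<open>A 2-cochain on a group G with values in an abelian group A (trivial action) is a
function on carrier G x carrier G; only its values on the carrier matter.\<close>

definition cocycle2 :: "('g, 'b) monoid_scheme \<Rightarrow> ('g \<Rightarrow> 'g \<Rightarrow> 'a::ab_group_add) \<Rightarrow> bool" where
  "cocycle2 G f \<longleftrightarrow> (\<forall>x\<in>carrier G. \<forall>y\<in>carrier G. \<forall>z\<in>carrier G.
      f y z - f (x \<otimes>\<^bsub>G\<^esub> y) z + f x (y \<otimes>\<^bsub>G\<^esub> z) - f x y = 0)"

definition coboundary2 :: "('g, 'b) monoid_scheme \<Rightarrow> ('g \<Rightarrow> 'g \<Rightarrow> 'a::ab_group_add) \<Rightarrow> bool" where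
  "coboundary2 G f \<longleftrightarrow> (\<exists>h :: 'g \<Rightarrow> 'a. \<forall>x\<in>carrier G. \<forall>y\<in>carrier G.
      f x y = h y - h (x \<otimes>\<^bsub>G\<^esub> y) + h x)"

definition cohomologous2 :: "('g, 'b) monoid_scheme \<Rightarrow> ('g \<Rightarrow> 'g \<Rightarrow> 'a::ab_group_add) \<Rightarrow> ('g \<Rightarrow> 'g \<Rightarrow> 'a) \<Rightarrow> bool" where
  "cohomologous2 G f1 f2 \<longleftrightarrow> coboundary2 G (\<lambda>x y. f1 x y - f2 x y)"

definition inflation2 :: "('g, 'b) monoid_scheme \<Rightarrow> 'g set \<Rightarrow> ('g set \<Rightarrow> 'g set \<Rightarrow> 'a) \<Rightarrow> ('g \<Rightarrow> 'g \<Rightarrow> 'a)" where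
  "inflation2 G N f = (\<lambda>x y. f (N #>\<^bsub>G\<^esub> x) (N #>\<^bsub>G\<^esub> y))"

definition J_mat :: "nat \<Rightarrow> 4 mat" where
  "J_mat g = four_block_mat (0\<^sub>m g g) (1\<^sub>m g) (- (1\<^sub>m g)) (0\<^sub>m g g)"

definition Sp4 :: "nat \<Rightarrow> 4 mat set" where
  "Sp4 g = {X \<in> carrier_mat (2*g) (2*g). transpose_mat X * J_mat g * X = J_mat g}"

definition Sp4_group :: "nat \<Rightarrow> 4 mat monoid" where
  "Sp4_group g = \<lparr>carrier = Sp4 g, mult = (*), one = 1\<^sub>m (2*g)\<rparr>"

text \<open>The normal subgroup Y: matrices [[I+2a, 2b],[2c, I-2a^t]] (a, b, c integer g x g
matrices read mod 2, b and c symmetric) with Diag(b) = Diag(c) = 0 and Tr(a) = 0 mod 2.\<close>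

definition Y4 :: "nat \<Rightarrow> 4 mat set" where
  "Y4 g = {X \<in> Sp4 g. \<exists>a b c :: nat \<Rightarrow> nat \<Rightarrow> int.
      (\<forall>i<g. \<forall>j<g.
          X $$ (i, j) = of_int ((if i = j then 1 else 0) + 2 * a i j)
        \<and> X $$ (i, g + j) = of_int (2 * b i j)
        \<and> X $$ (g + i, j) = of_int (2 * c i j)
        \<and> X $$ (g + i, g + j) = of_int ((if i = j then 1 else 0) - 2 * a j i)
        \<and> even (b i j - b j i) \<and> even (c i j - c j i))
    \<and> (\<forall>i<g. even (b i i) \<and> even (c i i))
    \<and> even (\<Sum>i<g. a i i)}"

definition frakH :: "nat \<Rightarrow> 4 mat set monoid" where
  "frakH g = Sp4_group g Mod Y4 g"

end

theory Submission
  imports Defs "HOL-Algebra.Generated_Groups" "Jordan_Normal_Form.Determinant"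
    "HOL-Library.Function_Algebras"
begin

text \<open>
  Suppose the inflations of two 2-cochains on \<open>H = G/Y\<close>, \<open>G = Sp(2g,\<int>/4)\<close>, differ by the
  coboundary of a 1-cochain \<open>h\<close> on \<open>G\<close>. Comparing the coboundary identity at \<open>(n, z)\<close>,
  \<open>(1, z)\<close> and \<open>(x, n y)\<close>, \<open>(x, y)\<close> for \<open>n \<in> Y\<close> shows that \<open>k(n) = h(n) - h(1)\<close> is a
  homomorphism \<open>Y \<rightarrow> A\<close> invariant under conjugation by \<open>G\<close>, with \<open>h(x n y) = k(n) + h(x y)\<close>.
  Hence \<open>k\<close> vanishes on the subgroup generated by the commutators \<open>[x, n]\<close>. For \<open>g \<ge> 3\<close> this
  subgroup is all of \<open>Y\<close>: writing elements of \<open>Y\<close> as \<open>I + 2\<phi>\<close> with \<open>\<phi>\<close> taken mod 2, \<open>Y\<close> is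
  elementary abelian and spanned by explicit commutators with transvections, each of which
  needs an auxiliary third index. So \<open>h\<close> is constant on cosets of \<open>Y\<close> and descends to a
  1-cochain on \<open>H\<close> whose coboundary is the difference of the two cochains.
\<close>

section \<open>Injectivity of inflation when the kernel consists of commutators\<close>

text \<open>For normal \<open>N\<close> these are the commutators \<open>[x, n]\<close>; conjugacy is stated as
  \<open>x \<otimes> n = n' \<otimes> x\<close> so that no inverse of \<open>x\<close> is needed.\<close>

definition conjugation_quotients :: "('g, 'b) monoid_scheme \<Rightarrow> 'g set \<Rightarrow> 'g set" where
  "conjugation_quotients G N =
     {n' \<otimes>\<^bsub>G\<^esub> inv\<^bsub>G\<^esub> n | n n'.
        n \<in> N \<and> n' \<in> N \<and> (\<exists>x\<in>carrier G. x \<otimes>\<^bsub>G\<^esub> n = n' \<otimes>\<^bsub>G\<^esub> x)}"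

locale coset_coboundary = subgroup N G + group G
  for N and G (structure) +
  fixes F :: "'g set \<Rightarrow> 'g set \<Rightarrow> 'a::ab_group_add" and h :: "'g \<Rightarrow> 'a"
  assumes coboundary:
    "\<lbrakk>x \<in> carrier G; y \<in> carrier G\<rbrakk> \<Longrightarrow> F (N #> x) (N #> y) = h y - h (x \<otimes> y) + h x"
begin

lemma rcos_mult_const: "n \<in> N \<Longrightarrow> y \<in> carrier G \<Longrightarrow> N #> (n \<otimes> y) = N #> y"
  by (metis coset_mult_assoc group_axioms rcos_const subgroup.mem_carrier subgroup_axioms subset)

lemma h_mult_left:
  assumes "n \<in> N" "z \<in> carrier G"
  shows "h (n \<otimes> z) = h z + (h n - h \<one>)"
proof -
  have "h z - h (n \<otimes> z) + h n = h z - h (\<one> \<otimes> z) + h \<one>"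
    using coboundary[of n z] coboundary[of \<one> z] assms rcos_const[of n] rcos_const[of \<one>]
    by simp
  with assms show ?thesis by (simp add: algebra_simps)
qed

lemma h_mult_middle:
  assumes "x \<in> carrier G" "n \<in> N" "y \<in> carrier G"
  shows "h (x \<otimes> (n \<otimes> y)) = (h n - h \<one>) + h (x \<otimes> y)"
proof -
  have "h (n \<otimes> y) - h (x \<otimes> (n \<otimes> y)) + h x = h y - h (x \<otimes> y) + h x"
    using coboundary[of x "n \<otimes> y"] coboundary[of x y] assms rcos_mult_const by simp
  with assms show ?thesis by (simp add: h_mult_left algebra_simps)
qed

lemma h_conjugate_eq:
  assumes "x \<in> carrier G" "n \<in> N" "n' \<in> N" "x \<otimes> n = n' \<otimes> x"
  shows "h n = h n'"
  using h_mult_middle[of x n \<one>] h_mult_left[of n' x] assms by simp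

lemma h_inv: "n \<in> N \<Longrightarrow> h (inv n) = h \<one> + (h \<one> - h n)"
  using h_mult_left[of "inv n" n] by (simp add: algebra_simps)

lemma h_conjugation_quotient:
  assumes "q \<in> conjugation_quotients G N"
  shows "q \<in> N \<and> h q = h \<one>"
proof -
  obtain n n' x where q: "q = n' \<otimes> inv n" and N: "n \<in> N" "n' \<in> N"
    and x: "x \<in> carrier G" "x \<otimes> n = n' \<otimes> x"
    using assms unfolding conjugation_quotients_def by blast
  have "h q = h (inv n) + (h n' - h \<one>)" using q N by (simp add: h_mult_left)
  also have "\<dots> = h \<one>" using h_inv N h_conjugate_eq[OF x(1) N x(2)] by simp
  finally show ?thesis using q N by simp
qed

lemma h_generate_conjugation_quotients:
  "q \<in> generate G (conjugation_quotients G N) \<Longrightarrow> q \<in> N \<and> h q = h \<one>"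
proof (induction rule: generate.induct)
  case (incl q)
  then show ?case by (rule h_conjugation_quotient)
next
  case (inv q)
  then show ?case using h_conjugation_quotient h_inv by simp
next
  case (eng a b)
  then show ?case by (simp add: h_mult_left)
qed simp

lemma h_rcos:
  assumes "N \<subseteq> generate G (conjugation_quotients G N)" "x \<in> carrier G" "s \<in> N #> x"
  shows "h s = h x"
  using assms h_mult_left h_generate_conjugation_quotients unfolding r_coset_def by fastforce

lemma h_rcos_product:
  assumes "N \<subseteq> generate G (conjugation_quotients G N)" "x \<in> carrier G" "y \<in> carrier G"
    and "s \<in> (N #> x) <#> (N #> y)"
  shows "h s = h (x \<otimes> y)"
proof -
  obtain n m where s: "s = (n \<otimes> x) \<otimes> (m \<otimes> y)" and nm: "n \<in> N" "m \<in> N"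
    using assms(4) unfolding set_mult_def r_coset_def by blast
  have "s = n \<otimes> (x \<otimes> (m \<otimes> y))" using s nm assms(2,3) by (simp add: m_assoc)
  moreover have "h n = h \<one>" "h m = h \<one>"
    using nm assms(1) h_generate_conjugation_quotients by blast+
  ultimately show ?thesis
    using nm assms(2,3) by (simp add: h_mult_left h_mult_middle)
qed

lemma coboundary2_FactGroup:
  assumes "N \<subseteq> generate G (conjugation_quotients G N)"
  shows "coboundary2 (G Mod N) F"
  unfolding coboundary2_def
proof (intro exI ballI)
  let ?h = "\<lambda>S. h (SOME s. s \<in> S)"
  fix P R assume "P \<in> carrier (G Mod N)" "R \<in> carrier (G Mod N)"
  then obtain x y where xy: "x \<in> carrier G" "y \<in> carrier G" "P = N #> x" "R = N #> y"
    unfolding carrier_FactGroup by blast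
  have "x \<in> P" "y \<in> R" using xy rcos_self subgroup_axioms by auto
  then have "x \<otimes> y \<in> P <#> R" unfolding set_mult_def by blast
  with \<open>x \<in> P\<close> \<open>y \<in> R\<close> have "(SOME s. s \<in> P) \<in> P" "(SOME s. s \<in> R) \<in> R"
      "(SOME s. s \<in> P <#> R) \<in> P <#> R"
    by (auto simp: some_in_eq)
  then have "?h P = h x" "?h R = h y" "?h (P <#> R) = h (x \<otimes> y)"
    using xy h_rcos[OF assms] h_rcos_product[OF assms] by simp_all
  then show "F P R = ?h R - ?h (P \<otimes>\<^bsub>G Mod N\<^esub> R) + ?h P"
    using xy coboundary by simp
qed

end

lemma inflation2_cohomologous_imp_cohomologous:
  assumes "group G" "subgroup N G" "N \<subseteq> generate G (conjugation_quotients G N)"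
    and "cohomologous2 G (inflation2 G N f1) (inflation2 G N f2)"
  shows "cohomologous2 (G Mod N) f1 f2"
proof -
  obtain h where cob: "\<And>x y. x \<in> carrier G \<Longrightarrow> y \<in> carrier G \<Longrightarrow>
      f1 (N #>\<^bsub>G\<^esub> x) (N #>\<^bsub>G\<^esub> y) - f2 (N #>\<^bsub>G\<^esub> x) (N #>\<^bsub>G\<^esub> y)
        = h y - h (x \<otimes>\<^bsub>G\<^esub> y) + h x"
    using assms(4) unfolding cohomologous2_def coboundary2_def inflation2_def by blast
  interpret coset_coboundary N G "\<lambda>P R. f1 P R - f2 P R" h
    using assms(1,2) cob by (auto intro!: coset_coboundary.intro coset_coboundary_axioms.intro)
  show ?thesis
    using coboundary2_FactGroup[OF assms(3)] by (simp add: cohomologous2_def)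
qed

section \<open>Integer representatives of matrices over \<open>\<int>/4\<close>\<close>

definition int_mat :: "nat \<Rightarrow> (nat \<Rightarrow> nat \<Rightarrow> int) \<Rightarrow> 4 mat" where
  "int_mat n f = mat n n (\<lambda>(i, j). of_int (f i j))"

definition fun_mult ::
    "nat \<Rightarrow> (nat \<Rightarrow> nat \<Rightarrow> int) \<Rightarrow> (nat \<Rightarrow> nat \<Rightarrow> int) \<Rightarrow> nat \<Rightarrow> nat \<Rightarrow> int" where
  "fun_mult n f h = (\<lambda>i j. \<Sum>r<n. f i r * h r j)"

definition delta :: "nat \<Rightarrow> nat \<Rightarrow> int" where
  "delta i j = (if i = j then 1 else 0)"

lemma int_mat_carrier [simp]: "int_mat n f \<in> carrier_mat n n"
  by (simp add: int_mat_def)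

lemma int_mat_dims [simp]: "dim_row (int_mat n f) = n" "dim_col (int_mat n f) = n"
  by (auto simp: int_mat_def)

lemma int_mat_index [simp]: "i < n \<Longrightarrow> j < n \<Longrightarrow> int_mat n f $$ (i, j) = of_int (f i j)"
  by (simp add: int_mat_def)

lemma int_mat_mult: "int_mat n f * int_mat n h = int_mat n (fun_mult n f h)"
  by (rule eq_matI) (auto simp: scalar_prod_def fun_mult_def lessThan_atLeast0 intro!: sum.cong)

lemma of_int_eq_mod4: "4 dvd (x - y) \<Longrightarrow> (of_int x :: 4) = of_int y"
proof -
  assume "4 dvd (x - y)"
  then have "(of_int (x - y) :: 4) = 0" by (subst of_int_eq_0_iff_char_dvd) simp
  then show ?thesis by simp
qed

lemma int_mat_eqI:
  "(\<And>i j. i < n \<Longrightarrow> j < n \<Longrightarrow> 4 dvd (f i j - h i j)) \<Longrightarrow> int_mat n f = int_mat n h"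
  by (rule eq_matI) (auto intro: of_int_eq_mod4)

lemma int_mat_transpose: "transpose_mat (int_mat n f) = int_mat n (\<lambda>i j. f j i)"
  by (rule eq_matI) auto

lemma int_mat_delta: "int_mat n delta = 1\<^sub>m n"
  by (rule eq_matI) (auto simp: delta_def)

lemma fun_mult_delta_left:
  assumes "i < n"
  shows "fun_mult n delta h i j = h i j"
proof -
  have "fun_mult n delta h i j = (\<Sum>r<n. if r = i then h r j else 0)"
    unfolding fun_mult_def delta_def by (rule sum.cong) auto
  with assms show ?thesis by simp
qed

lemma fun_mult_delta_right:
  assumes "j < n"
  shows "fun_mult n f delta i j = f i j"
proof -
  have "fun_mult n f delta i j = (\<Sum>r<n. if r = j then f i r else 0)"
    unfolding fun_mult_def delta_def by (rule sum.cong) auto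
  with assms show ?thesis by simp
qed

lemma fun_mult_add_left:
  "fun_mult n (\<lambda>i j. f i j + c * f' i j) h i j = fun_mult n f h i j + c * fun_mult n f' h i j"
  by (simp add: fun_mult_def algebra_simps sum.distrib sum_distrib_left)

lemma fun_mult_add_right:
  "fun_mult n f (\<lambda>i j. h i j + c * h' i j) i j = fun_mult n f h i j + c * fun_mult n f h' i j"
  by (simp add: fun_mult_def algebra_simps sum.distrib sum_distrib_left)

section \<open>\<open>Sp(2g, \<int>/4)\<close> is a group\<close>

definition J_fun :: "nat \<Rightarrow> nat \<Rightarrow> nat \<Rightarrow> int" where
  "J_fun g p q = (if p < g \<and> q = p + g then 1 else if g \<le> p \<and> p = q + g then -1 else 0)"

lemma J_mat_int_mat: "J_mat g = int_mat (2*g) (J_fun g)"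
  unfolding J_mat_def by (rule eq_matI) (auto simp: J_fun_def)

lemma J_mat_carrier [simp]: "J_mat g \<in> carrier_mat (2*g) (2*g)"
  by (simp add: J_mat_int_mat)

lemma J_mat_dims [simp]: "dim_row (J_mat g) = 2*g" "dim_col (J_mat g) = 2*g"
  by (simp_all add: J_mat_int_mat)

lemma fun_mult_J_left:
  assumes "p < 2*g"
  shows "fun_mult (2*g) (J_fun g) h p q = (if p < g then h (p+g) q else - h (p-g) q)"
proof -
  have "fun_mult (2*g) (J_fun g) h p q = (\<Sum>r<2*g. if r = (if p < g then p + g else p - g)
      then (if p < g then h r q else - h r q) else 0)"
    unfolding fun_mult_def J_fun_def by (rule sum.cong) auto
  also have "\<dots> = (if p < g then h (p+g) q else - h (p-g) q)"
    using assms by (subst sum.delta) auto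
  finally show ?thesis .
qed

lemma fun_mult_J_right:
  assumes "q < 2*g"
  shows "fun_mult (2*g) f (J_fun g) p q = (if q < g then - f p (q+g) else f p (q-g))"
proof -
  have "fun_mult (2*g) f (J_fun g) p q = (\<Sum>r<2*g. if r = (if q < g then q + g else q - g)
      then (if q < g then - f p r else f p r) else 0)"
    unfolding fun_mult_def J_fun_def using assms by (intro sum.cong) auto
  also have "\<dots> = (if q < g then - f p (q+g) else f p (q-g))"
    using assms by (cases "q < g") (simp_all add: sum.delta)
  finally show ?thesis .
qed

lemma transpose_J_mult_J: "transpose_mat (J_mat g) * J_mat g = 1\<^sub>m (2*g)"
  unfolding J_mat_int_mat int_mat_transpose int_mat_mult int_mat_delta[symmetric]
  by (rule int_mat_eqI) (auto simp: fun_mult_J_right J_fun_def delta_def)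

lemma int_mat_in_Sp4I:
  assumes "\<And>p q. p < 2*g \<Longrightarrow> q < 2*g \<Longrightarrow>
    4 dvd (fun_mult (2*g) (fun_mult (2*g) (\<lambda>i j. F j i) (J_fun g)) F p q - J_fun g p q)"
  shows "int_mat (2*g) F \<in> Sp4 g"
  unfolding Sp4_def using assms
  by (auto simp: J_mat_int_mat int_mat_transpose int_mat_mult intro!: int_mat_eqI)

lemma Sp4_carrier: "X \<in> Sp4 g \<Longrightarrow> X \<in> carrier_mat (2*g) (2*g)"
  by (simp add: Sp4_def)

lemma Sp4_one: "1\<^sub>m (2*g) \<in> Sp4 g"
  by (simp add: Sp4_def)

lemma Sp4_mult_closed:
  assumes X: "X \<in> Sp4 g" and Z: "Z \<in> Sp4 g"
  shows "X * Z \<in> Sp4 g"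
proof -
  have cX: "X \<in> carrier_mat (2*g) (2*g)" and cZ: "Z \<in> carrier_mat (2*g) (2*g)"
    using X Z by (auto simp: Sp4_def)
  have tX: "transpose_mat X \<in> carrier_mat (2*g) (2*g)"
    and tZ: "transpose_mat Z \<in> carrier_mat (2*g) (2*g)" using cX cZ by auto
  have XJ: "transpose_mat X * J_mat g \<in> carrier_mat (2*g) (2*g)" using tX by auto
  have XZ: "X * Z \<in> carrier_mat (2*g) (2*g)" using cX cZ by auto
  have "transpose_mat (X * Z) * J_mat g * (X * Z)
      = transpose_mat Z * ((transpose_mat X * J_mat g) * (X * Z))"
    by (simp add: transpose_mult[OF cX cZ] assoc_mult_mat[OF tZ tX J_mat_carrier]
        assoc_mult_mat[OF tZ XJ XZ])
  also have "(transpose_mat X * J_mat g) * (X * Z) = (transpose_mat X * J_mat g * X) * Z"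
    by (rule assoc_mult_mat[OF XJ cX cZ, symmetric])
  also have "transpose_mat Z * (transpose_mat X * J_mat g * X * Z) = J_mat g"
    using X Z assoc_mult_mat[OF tZ J_mat_carrier cZ] by (simp add: Sp4_def)
  finally show ?thesis using XZ by (simp add: Sp4_def)
qed

lemma mat_mult_left_inverse_imp_right_inverse:
  fixes A B :: "'a::comm_ring_1 mat"
  assumes A: "A \<in> carrier_mat n n" and B: "B \<in> carrier_mat n n" and BA: "B * A = 1\<^sub>m n"
  shows "A * B = 1\<^sub>m n"
proof -
  define C where "C = det B \<cdot>\<^sub>m adj_mat A"
  have C: "C \<in> carrier_mat n n" using adj_mat(1)[OF A] by (simp add: C_def)
  have "det B * det A = 1" using det_mult[OF B A] BA by simp
  then have "det B \<cdot>\<^sub>m (det A \<cdot>\<^sub>m 1\<^sub>m n) = 1\<^sub>m n"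
    by (intro eq_matI) (auto simp: mult.assoc[symmetric])
  then have AC: "A * C = 1\<^sub>m n"
    using A adj_mat[OF A] by (simp add: C_def mult_smult_distrib)
  have "B = (B * A) * C" using A B C AC by simp
  then have "B = C" using BA C by simp
  then show ?thesis using AC by simp
qed

lemma Sp4_left_inverse:
  assumes X: "X \<in> Sp4 g"
  shows "\<exists>Y\<in>Sp4 g. Y * X = 1\<^sub>m (2*g)"
proof
  let ?J = "J_mat g" and ?Y = "transpose_mat (J_mat g) * (transpose_mat X * J_mat g)"
  have cX: "X \<in> carrier_mat (2*g) (2*g)" using X by (simp add: Sp4_def)
  have tX: "transpose_mat X \<in> carrier_mat (2*g) (2*g)" using cX by simp
  have XJ: "transpose_mat X * ?J \<in> carrier_mat (2*g) (2*g)" using tX by simp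
  have tJ: "transpose_mat ?J \<in> carrier_mat (2*g) (2*g)" by simp
  have Y: "?Y \<in> carrier_mat (2*g) (2*g)" by (rule mult_carrier_mat[OF tJ XJ])
  have tY: "transpose_mat ?Y \<in> carrier_mat (2*g) (2*g)" using Y by simp
  have XY_carrier: "X * ?Y \<in> carrier_mat (2*g) (2*g)" using cX Y by simp
  have "?Y * X = transpose_mat ?J * (transpose_mat X * ?J * X)"
    by (rule assoc_mult_mat[OF tJ XJ cX])
  then show YX: "?Y * X = 1\<^sub>m (2*g)"
    using X transpose_J_mult_J by (simp add: Sp4_def)
  have XY: "X * ?Y = 1\<^sub>m (2*g)"
    by (rule mat_mult_left_inverse_imp_right_inverse[OF cX Y YX])
  have "transpose_mat ?Y * ?J * ?Y = transpose_mat ?Y * ((transpose_mat X * ?J * X) * ?Y)"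
    using X assoc_mult_mat[OF tY J_mat_carrier Y] by (simp add: Sp4_def)
  also have "\<dots> = (transpose_mat ?Y * transpose_mat X) * ?J * (X * ?Y)"
    by (simp add: assoc_mult_mat[OF tY tX J_mat_carrier] assoc_mult_mat[OF tY XJ XY_carrier]
        assoc_mult_mat[OF XJ cX Y])
  also have "\<dots> = transpose_mat (X * ?Y) * ?J * (X * ?Y)"
    by (simp add: transpose_mult[OF cX Y])
  also have "\<dots> = ?J"
    using XY by simp
  finally show "?Y \<in> Sp4 g"
    using Y by (simp add: Sp4_def)
qed

lemma group_Sp4_group: "group (Sp4_group g)"
proof (rule groupI)
  fix X Y Z assume "X \<in> carrier (Sp4_group g)" "Y \<in> carrier (Sp4_group g)" "Z \<in> carrier (Sp4_group g)"
  then show "X \<otimes>\<^bsub>Sp4_group g\<^esub> Y \<otimes>\<^bsub>Sp4_group g\<^esub> Z = X \<otimes>\<^bsub>Sp4_group g\<^esub> (Y \<otimes>\<^bsub>Sp4_group g\<^esub> Z)"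
    using assoc_mult_mat[OF Sp4_carrier Sp4_carrier Sp4_carrier] by (simp add: Sp4_group_def)
qed (auto simp: Sp4_group_def Sp4_mult_closed Sp4_one Sp4_left_inverse dest: Sp4_carrier)

section \<open>The level-2 subgroup and \<open>Y\<close>\<close>

definition level2_mat :: "nat \<Rightarrow> (nat \<Rightarrow> nat \<Rightarrow> int) \<Rightarrow> 4 mat" where
  "level2_mat g \<phi> = int_mat (2*g) (\<lambda>p q. delta p q + 2 * \<phi> p q)"

lemma level2_mat_index:
  "p < 2*g \<Longrightarrow> q < 2*g \<Longrightarrow> level2_mat g \<phi> $$ (p, q) = of_int (delta p q + 2 * \<phi> p q)"
  by (simp add: level2_mat_def)

lemma level2_mat_mult: "level2_mat g \<phi> * level2_mat g \<psi> = level2_mat g (\<phi> + \<psi>)"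
  unfolding level2_mat_def int_mat_mult
proof (rule int_mat_eqI)
  fix i j assume i: "i < 2*g" and j: "j < 2*g"
  have "fun_mult (2*g) (\<lambda>p q. delta p q + 2 * \<phi> p q) (\<lambda>p q. delta p q + 2 * \<psi> p q) i j
     = delta i j + 2 * \<phi> i j + 2 * (\<psi> i j + 2 * fun_mult (2*g) \<phi> \<psi> i j)"
    using i j by (simp add: fun_mult_add_right fun_mult_add_left fun_mult_delta_right fun_mult_delta_left)
  then show "4 dvd (fun_mult (2*g) (\<lambda>p q. delta p q + 2 * \<phi> p q) (\<lambda>p q. delta p q + 2 * \<psi> p q) i j
      - (delta i j + 2 * (\<phi> + \<psi>) i j))"
    by (simp add: algebra_simps)
qed

lemma level2_mat_cong:
  assumes "\<And>p q. p < 2*g \<Longrightarrow> q < 2*g \<Longrightarrow> even (\<phi> p q - \<psi> p q)"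
  shows "level2_mat g \<phi> = level2_mat g \<psi>"
  unfolding level2_mat_def
proof (rule int_mat_eqI)
  fix i j assume "i < 2*g" "j < 2*g"
  then obtain t where "\<phi> i j - \<psi> i j = 2 * t" using assms by (blast elim: evenE)
  then show "4 dvd (delta i j + 2 * \<phi> i j - (delta i j + 2 * \<psi> i j))"
    by (simp add: algebra_simps)
qed

lemma level2_mat_zero: "level2_mat g 0 = 1\<^sub>m (2*g)"
  by (simp add: level2_mat_def int_mat_delta[symmetric])

text \<open>The symplectic condition for \<open>I + 2\<phi>\<close> only involves \<open>\<phi>\<^sup>T J + J \<phi>\<close> modulo 2.\<close>

lemma level2_mat_in_Sp4I:
  assumes "\<And>p q. p < 2*g \<Longrightarrow> q < 2*g \<Longrightarrow>
     even ((if q < g then - \<phi> (q+g) p else \<phi> (q-g) p) + (if p < g then \<phi> (p+g) q else - \<phi> (p-g) q))"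
  shows "level2_mat g \<phi> \<in> Sp4 g"
  unfolding level2_mat_def
proof (rule int_mat_in_Sp4I)
  fix p q assume p: "p < 2*g" and q: "q < 2*g"
  let ?n = "2*g" and ?\<phi>t = "\<lambda>i j. \<phi> j i"
  define C where "C = fun_mult ?n (\<lambda>i j. delta j i + 2 * \<phi> j i) (J_fun g)"
  have delta_sym: "(\<lambda>i j. delta j i + 2 * \<phi> j i) = (\<lambda>i j. delta i j + 2 * \<phi> j i)"
    by (intro ext) (auto simp: delta_def)
  have C_eq: "C = (\<lambda>i j. fun_mult ?n delta (J_fun g) i j + 2 * fun_mult ?n ?\<phi>t (J_fun g) i j)"
    by (intro ext) (simp add: C_def delta_sym fun_mult_add_left)
  have C1: "C p r = J_fun g p r + 2 * fun_mult ?n ?\<phi>t (J_fun g) p r" for r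
    unfolding C_eq using p by (simp add: fun_mult_delta_left)
  have "fun_mult ?n (fun_mult ?n delta (J_fun g)) \<phi> p q = fun_mult ?n (J_fun g) \<phi> p q"
    unfolding fun_mult_def using p by (intro sum.cong) (auto simp: fun_mult_delta_left[unfolded fun_mult_def])
  then have C2: "fun_mult ?n C \<phi> p q
      = fun_mult ?n (J_fun g) \<phi> p q + 2 * fun_mult ?n (fun_mult ?n ?\<phi>t (J_fun g)) \<phi> p q"
    unfolding C_eq fun_mult_add_left by simp
  have "fun_mult ?n C (\<lambda>i j. delta i j + 2 * \<phi> i j) p q = C p q + 2 * fun_mult ?n C \<phi> p q"
    using q by (simp add: fun_mult_add_right fun_mult_delta_right)
  also have "\<dots> = J_fun g p q + 2 * ((if q < g then - \<phi> (q+g) p else \<phi> (q-g) p)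
      + (if p < g then \<phi> (p+g) q else - \<phi> (p-g) q))
      + 4 * fun_mult ?n (fun_mult ?n ?\<phi>t (J_fun g)) \<phi> p q"
    unfolding C1 C2 fun_mult_J_left[OF p] fun_mult_J_right[OF q] using p q by (simp add: algebra_simps)
  finally have E: "fun_mult ?n C (\<lambda>i j. delta i j + 2 * \<phi> i j) p q = \<dots>" .
  obtain t where t: "(if q < g then - \<phi> (q+g) p else \<phi> (q-g) p)
      + (if p < g then \<phi> (p+g) q else - \<phi> (p-g) q) = 2 * t"
    using assms[OF p q] by (rule evenE)
  show "4 dvd (fun_mult ?n C (\<lambda>i j. delta i j + 2 * \<phi> i j) p q - J_fun g p q)"
    unfolding E t by simp
qed

definition block_fun ::
    "nat \<Rightarrow> (nat \<Rightarrow> nat \<Rightarrow> int) \<Rightarrow> (nat \<Rightarrow> nat \<Rightarrow> int) \<Rightarrow> (nat \<Rightarrow> nat \<Rightarrow> int) \<Rightarrow> nat \<Rightarrow> nat \<Rightarrow> int" where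
  "block_fun g a b c = (\<lambda>p q. if p < g then (if q < g then a p q else b p (q-g))
                         else (if q < g then c (p-g) q else - a (q-g) (p-g)))"

definition Y4_cond ::
    "nat \<Rightarrow> (nat \<Rightarrow> nat \<Rightarrow> int) \<Rightarrow> (nat \<Rightarrow> nat \<Rightarrow> int) \<Rightarrow> (nat \<Rightarrow> nat \<Rightarrow> int) \<Rightarrow> bool" where
  "Y4_cond g a b c \<longleftrightarrow> (\<forall>i<g. \<forall>j<g. even (b i j - b j i) \<and> even (c i j - c j i))
     \<and> (\<forall>i<g. even (b i i) \<and> even (c i i)) \<and> even (\<Sum>i<g. a i i)"

lemma block_fun_add:
  "block_fun g a b c + block_fun g a' b' c' = block_fun g (a + a') (b + b') (c + c')"
  by (simp add: block_fun_def fun_eq_iff)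

lemma level2_block_cong:
  assumes "\<And>i j. i < g \<Longrightarrow> j < g \<Longrightarrow>
    even (a i j - a' i j) \<and> even (b i j - b' i j) \<and> even (c i j - c' i j)"
  shows "level2_mat g (block_fun g a b c) = level2_mat g (block_fun g a' b' c')"
proof (rule level2_mat_cong)
  fix p q assume "p < 2*g" "q < 2*g"
  then have "p - g < g" "q - g < g" by auto
  then show "even (block_fun g a b c p q - block_fun g a' b' c' p q)"
    using assms[of p q] assms[of p "q-g"] assms[of "p-g" q] assms[of "q-g" "p-g"]
      \<open>p < 2*g\<close> \<open>q < 2*g\<close>
    by (auto simp: block_fun_def)
qed

lemma level2_block_in_Sp4:
  assumes "\<forall>i<g. \<forall>j<g. even (b i j - b j i) \<and> even (c i j - c j i)"
  shows "level2_mat g (block_fun g a b c) \<in> Sp4 g"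
proof (rule level2_mat_in_Sp4I)
  fix p q assume p: "p < 2*g" and q: "q < 2*g"
  then have "p - g < g" "q - g < g" by auto
  with assms show "even ((if q < g then - block_fun g a b c (q+g) p else block_fun g a b c (q-g) p)
      + (if p < g then block_fun g a b c (p+g) q else - block_fun g a b c (p-g) q))"
    by (cases "p < g"; cases "q < g") (simp_all add: block_fun_def)
qed

lemma level2_block_in_Y4:
  assumes "Y4_cond g a b c"
  shows "level2_mat g (block_fun g a b c) \<in> Y4 g"
  unfolding Y4_def
proof (intro CollectI conjI exI)
  show "level2_mat g (block_fun g a b c) \<in> Sp4 g"
    using assms by (intro level2_block_in_Sp4) (simp add: Y4_cond_def)
  show "\<forall>i<g. \<forall>j<g.
      level2_mat g (block_fun g a b c) $$ (i, j) = of_int ((if i = j then 1 else 0) + 2 * a i j) \<and>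
      level2_mat g (block_fun g a b c) $$ (i, g + j) = of_int (2 * b i j) \<and>
      level2_mat g (block_fun g a b c) $$ (g + i, j) = of_int (2 * c i j) \<and>
      level2_mat g (block_fun g a b c) $$ (g + i, g + j) = of_int ((if i = j then 1 else 0) - 2 * a j i) \<and>
      even (b i j - b j i) \<and> even (c i j - c j i)"
    using assms by (auto simp: level2_mat_index block_fun_def delta_def Y4_cond_def)
  show "\<forall>i<g. even (b i i) \<and> even (c i i)" "even (\<Sum>i<g. a i i)"
    using assms by (auto simp: Y4_cond_def)
qed

lemma less_double_cases:
  fixes p g :: nat
  assumes "p < 2*g"
  obtains "p < g" | i where "p = g + i" "i < g"
proof (cases "p < g")
  case False
  with assms show ?thesis by (intro that(2)[of "p - g"]) auto
qed (rule that(1))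

lemma Y4_level2_blockE:
  assumes "X \<in> Y4 g"
  obtains a b c where "Y4_cond g a b c" "X = level2_mat g (block_fun g a b c)"
proof -
  from assms obtain a b c where X: "X \<in> Sp4 g" and
    E: "\<forall>i<g. \<forall>j<g.
          X $$ (i, j) = of_int ((if i = j then 1 else 0) + 2 * a i j)
        \<and> X $$ (i, g + j) = of_int (2 * b i j)
        \<and> X $$ (g + i, j) = of_int (2 * c i j)
        \<and> X $$ (g + i, g + j) = of_int ((if i = j then 1 else 0) - 2 * a j i)
        \<and> even (b i j - b j i) \<and> even (c i j - c j i)"
    and "\<forall>i<g. even (b i i) \<and> even (c i i)" "even (\<Sum>i<g. a i i)"
    unfolding Y4_def by blast
  then have "Y4_cond g a b c" by (simp add: Y4_cond_def)
  moreover have "X = level2_mat g (block_fun g a b c)"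
  proof (rule eq_matI)
    show "dim_row X = dim_row (level2_mat g (block_fun g a b c))"
      "dim_col X = dim_col (level2_mat g (block_fun g a b c))"
      using X by (auto simp: Sp4_def level2_mat_def)
    fix p q assume "p < dim_row (level2_mat g (block_fun g a b c))"
      "q < dim_col (level2_mat g (block_fun g a b c))"
    then have p: "p < 2*g" and q: "q < 2*g" by (auto simp: level2_mat_def)
    show "X $$ (p, q) = level2_mat g (block_fun g a b c) $$ (p, q)"
      using E p q
      by (cases rule: less_double_cases[OF p]; cases rule: less_double_cases[OF q])
        (simp_all add: level2_mat_index block_fun_def delta_def)
  qed
  ultimately show ?thesis using that by blast
qed

lemma Y4_square:
  assumes "X \<in> Y4 g"
  shows "X * X = 1\<^sub>m (2*g)"
proof -
  obtain a b c where "X = level2_mat g (block_fun g a b c)" using assms by (rule Y4_level2_blockE)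
  then have "X * X = level2_mat g (block_fun g a b c + block_fun g a b c)"
    by (simp add: level2_mat_mult)
  also have "\<dots> = level2_mat g 0" by (rule level2_mat_cong) simp
  finally show ?thesis by (simp add: level2_mat_zero)
qed

lemma Y4_mult_closed:
  assumes "X \<in> Y4 g" "Z \<in> Y4 g"
  shows "X * Z \<in> Y4 g"
proof -
  obtain a b c a' b' c' where Y1: "Y4_cond g a b c" "X = level2_mat g (block_fun g a b c)"
    and Y2: "Y4_cond g a' b' c'" "Z = level2_mat g (block_fun g a' b' c')"
    using assms by (metis Y4_level2_blockE)
  have "Y4_cond g (a + a') (b + b') (c + c')"
    using Y1(1) Y2(1) unfolding Y4_cond_def
    by (auto simp: sum.distrib)
  then show ?thesis
    unfolding Y1(2) Y2(2) level2_mat_mult block_fun_add by (rule level2_block_in_Y4)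
qed

lemma one_in_Y4: "1\<^sub>m (2*g) \<in> Y4 g"
proof -
  have "Y4_cond g 0 0 0" by (simp add: Y4_cond_def)
  moreover have "block_fun g 0 0 0 = 0"
    by (simp add: block_fun_def fun_eq_iff)
  ultimately show ?thesis using level2_block_in_Y4[of g 0 0 0] by (simp add: level2_mat_zero)
qed

lemma Y4_inv: "X \<in> Y4 g \<Longrightarrow> inv\<^bsub>Sp4_group g\<^esub> X = X"
  using Y4_square by (intro group.inv_equality[OF group_Sp4_group]) (auto simp: Sp4_group_def Y4_def)

lemma subgroup_Y4: "subgroup (Y4 g) (Sp4_group g)"
proof (rule group.subgroupI[OF group_Sp4_group])
  show "Y4 g \<subseteq> carrier (Sp4_group g)" by (auto simp: Y4_def Sp4_group_def)
  show "Y4 g \<noteq> {}" using one_in_Y4 by blast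
  fix X assume X: "X \<in> Y4 g"
  then show "inv\<^bsub>Sp4_group g\<^esub> X \<in> Y4 g" by (simp add: Y4_inv)
  fix Z assume "Z \<in> Y4 g"
  with X show "X \<otimes>\<^bsub>Sp4_group g\<^esub> Z \<in> Y4 g" by (simp add: Sp4_group_def Y4_mult_closed)
qed

section \<open>Commutators with transvections\<close>

text \<open>The transvection \<open>I + e\<^sub>k\<^sub>l - e\<^bsub>g+l,g+k\<^esub>\<close>, i.e. \<open>diag(U, U\<^sup>-\<^sup>T)\<close> with \<open>U = I + e\<^sub>k\<^sub>l\<close>.\<close>

definition transvection_fun :: "nat \<Rightarrow> nat \<Rightarrow> nat \<Rightarrow> nat \<Rightarrow> nat \<Rightarrow> int" where
  "transvection_fun g k l = (\<lambda>p q. delta p q + (if p = k \<and> q = l then 1 else 0)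
     - (if p = g + l \<and> q = g + k then 1 else 0))"

lemma fun_mult_transvection_left:
  assumes "p < n" "l < n" "g + k < n"
  shows "fun_mult n (transvection_fun g k l) F p q
    = F p q + (if p = k then F l q else 0) - (if p = g + l then F (g + k) q else 0)"
proof -
  have "fun_mult n (transvection_fun g k l) F p q = (\<Sum>r<n. (if r = p then F p q else 0)
      + (if r = l then (if p = k then F l q else 0) else 0)
      - (if r = g + k then (if p = g + l then F (g + k) q else 0) else 0))"
    unfolding fun_mult_def transvection_fun_def delta_def by (rule sum.cong) (auto simp: algebra_simps)
  also have "\<dots> = F p q + (if p = k then F l q else 0) - (if p = g + l then F (g + k) q else 0)"
    using assms by (simp add: sum.distrib sum_subtractf)
  finally show ?thesis .
qed

lemma fun_mult_transvection_right:
  assumes "q < n" "k < n" "g + l < n"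
  shows "fun_mult n F (transvection_fun g k l) p q
    = F p q + (if q = l then F p k else 0) - (if q = g + k then F p (g + l) else 0)"
proof -
  have "fun_mult n F (transvection_fun g k l) p q = (\<Sum>r<n. (if r = q then F p q else 0)
      + (if r = k then (if q = l then F p k else 0) else 0)
      - (if r = g + l then (if q = g + k then F p (g + l) else 0) else 0))"
    unfolding fun_mult_def transvection_fun_def delta_def by (rule sum.cong) (auto simp: algebra_simps)
  also have "\<dots> = F p q + (if q = l then F p k else 0) - (if q = g + k then F p (g + l) else 0)"
    using assms by (simp add: sum.distrib sum_subtractf)
  finally show ?thesis .
qed

definition transvection :: "nat \<Rightarrow> nat \<Rightarrow> nat \<Rightarrow> 4 mat" where
  "transvection g k l = int_mat (2*g) (transvection_fun g k l)"

lemma transvection_in_Sp4: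
  assumes "k < g" "l < g" "k \<noteq> l"
  shows "transvection g k l \<in> Sp4 g"
  unfolding transvection_def
proof (rule int_mat_in_Sp4I)
  fix p q assume p: "p < 2*g" and q: "q < 2*g"
  define C where "C = fun_mult (2*g) (\<lambda>i j. transvection_fun g k l j i) (J_fun g)"
  have C: "C p r = (if r < g then - transvection_fun g k l (r+g) p else transvection_fun g k l (r-g) p)"
    if "r < 2*g" for r
    unfolding C_def using that by (rule fun_mult_J_right)
  have "fun_mult (2*g) C (transvection_fun g k l) p q
      = C p q + (if q = l then C p k else 0) - (if q = g + k then C p (g + l) else 0)"
    using assms q by (intro fun_mult_transvection_right) auto
  also have "\<dots> = J_fun g p q"
  proof -
    have Cq: "C p q = (if q < g then - transvection_fun g k l (q+g) p else transvection_fun g k l (q-g) p)"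
      using C q by simp
    have Ck: "C p k = - transvection_fun g k l (k+g) p" using C assms by simp
    have Cl: "C p (g+l) = transvection_fun g k l l p" using C assms by simp
    show ?thesis unfolding Cq Ck Cl using assms p q by (auto simp: transvection_fun_def delta_def J_fun_def)
  qed
  finally show "4 dvd (fun_mult (2*g) C (transvection_fun g k l) p q - J_fun g p q)" by simp
qed

text \<open>With \<open>x = I + e\<close>, the relation \<open>x (I + 2\<psi>) = (I + 2\<psi>') x\<close> over \<open>\<int>/4\<close> amounts to
  \<open>\<psi> + e \<psi> \<equiv> \<psi>' + \<psi>' e\<close> modulo 2.\<close>

lemma transvection_conj:
  assumes kl: "k < g" "l < g"
    and H: "\<And>p q. p < 2*g \<Longrightarrow> q < 2*g \<Longrightarrow>
      even (\<psi> p q + (if p = k then \<psi> l q else 0) - (if p = g + l then \<psi> (g + k) q else 0)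
        - \<psi>' p q - (if q = l then \<psi>' p k else 0) + (if q = g + k then \<psi>' p (g + l) else 0))"
  shows "transvection g k l * level2_mat g \<psi> = level2_mat g \<psi>' * transvection g k l"
  unfolding transvection_def level2_mat_def int_mat_mult
proof (rule int_mat_eqI)
  fix p q assume p: "p < 2*g" and q: "q < 2*g"
  let ?F = "\<lambda>p q. delta p q + 2 * \<psi> p q" and ?F' = "\<lambda>p q. delta p q + 2 * \<psi>' p q"
  have L: "fun_mult (2*g) (transvection_fun g k l) ?F p q
      = ?F p q + (if p = k then ?F l q else 0) - (if p = g + l then ?F (g + k) q else 0)"
    using kl p by (intro fun_mult_transvection_left) auto
  have R: "fun_mult (2*g) ?F' (transvection_fun g k l) p q
      = ?F' p q + (if q = l then ?F' p k else 0) - (if q = g + k then ?F' p (g + l) else 0)"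
    using kl q by (intro fun_mult_transvection_right) auto
  obtain t where t: "\<psi> p q + (if p = k then \<psi> l q else 0) - (if p = g + l then \<psi> (g + k) q else 0)
      - \<psi>' p q - (if q = l then \<psi>' p k else 0) + (if q = g + k then \<psi>' p (g + l) else 0) = 2 * t"
    using H[OF p q] by (rule evenE)
  have "fun_mult (2*g) (transvection_fun g k l) ?F p q - fun_mult (2*g) ?F' (transvection_fun g k l) p q
    = 2 * (\<psi> p q + (if p = k then \<psi> l q else 0) - (if p = g + l then \<psi> (g + k) q else 0)
      - \<psi>' p q - (if q = l then \<psi>' p k else 0) + (if q = g + k then \<psi>' p (g + l) else 0))"
    unfolding L R by (auto simp: delta_def algebra_simps)
  then show "4 dvd (fun_mult (2*g) (transvection_fun g k l) ?F p q
      - fun_mult (2*g) ?F' (transvection_fun g k l) p q)"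
    unfolding t by simp
qed

abbreviation Y4_commutators :: "nat \<Rightarrow> 4 mat set" where
  "Y4_commutators g \<equiv> conjugation_quotients (Sp4_group g) (Y4 g)"

lemma level2_block_in_Y4_commutators:
  assumes "Y4_cond g a b c" "Y4_cond g a' b' c'" "x \<in> Sp4 g"
    and "x * level2_mat g (block_fun g a b c) = level2_mat g (block_fun g a' b' c') * x"
  shows "level2_mat g (block_fun g (a' + a) (b' + b) (c' + c)) \<in> Y4_commutators g"
proof -
  let ?n = "level2_mat g (block_fun g a b c)" and ?n' = "level2_mat g (block_fun g a' b' c')"
  have Y: "?n \<in> Y4 g" "?n' \<in> Y4 g"
    using level2_block_in_Y4[OF assms(1)] level2_block_in_Y4[OF assms(2)] .
  moreover have "\<exists>y\<in>carrier (Sp4_group g). y \<otimes>\<^bsub>Sp4_group g\<^esub> ?n = ?n' \<otimes>\<^bsub>Sp4_group g\<^esub> y"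
    using assms(3,4) by (auto simp: Sp4_group_def)
  ultimately have "?n' \<otimes>\<^bsub>Sp4_group g\<^esub> inv\<^bsub>Sp4_group g\<^esub> ?n \<in> Y4_commutators g"
    unfolding conjugation_quotients_def by blast
  moreover have "inv\<^bsub>Sp4_group g\<^esub> ?n = ?n" using Y by (intro Y4_inv)
  ultimately show ?thesis by (simp add: Sp4_group_def level2_mat_mult block_fun_add)
qed

lemma transvection_conj_upper:
  assumes kl: "k < g" "l < g"
    and H: "\<And>i j. i < g \<Longrightarrow> j < g \<Longrightarrow>
      even (B i j + (if i = k then B l j else 0) - B' i j + (if j = k then B' i l else 0))"
  shows "transvection g k l * level2_mat g (block_fun g 0 B 0)
    = level2_mat g (block_fun g 0 B' 0) * transvection g k l"
proof (rule transvection_conj[OF kl])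
  fix p q assume p: "p < 2*g" and q: "q < 2*g"
  show "even (block_fun g 0 B 0 p q + (if p = k then block_fun g 0 B 0 l q else 0)
      - (if p = g + l then block_fun g 0 B 0 (g + k) q else 0) - block_fun g 0 B' 0 p q
      - (if q = l then block_fun g 0 B' 0 p k else 0) + (if q = g + k then block_fun g 0 B' 0 p (g + l) else 0))"
    (is "even ?e")
  proof (cases "p < g \<and> \<not> q < g")
    case True
    then obtain j where j: "q = g + j" "j < g" using q by (metis less_double_cases)
    then have "?e = B p j + (if p = k then B l j else 0) - B' p j + (if j = k then B' p l else 0)"
      using True kl by (simp add: block_fun_def)
    then show ?thesis using H[of p j] True j by simp
  qed (use kl in \<open>auto simp: block_fun_def\<close>)
qed

lemma transvection_conj_lower:
  assumes kl: "k < g" "l < g"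
    and H: "\<And>i j. i < g \<Longrightarrow> j < g \<Longrightarrow>
      even (C i j - (if i = l then C k j else 0) - C' i j - (if j = l then C' i k else 0))"
  shows "transvection g k l * level2_mat g (block_fun g 0 0 C)
    = level2_mat g (block_fun g 0 0 C') * transvection g k l"
proof (rule transvection_conj[OF kl])
  fix p q assume p: "p < 2*g" and q: "q < 2*g"
  show "even (block_fun g 0 0 C p q + (if p = k then block_fun g 0 0 C l q else 0)
      - (if p = g + l then block_fun g 0 0 C (g + k) q else 0) - block_fun g 0 0 C' p q
      - (if q = l then block_fun g 0 0 C' p k else 0) + (if q = g + k then block_fun g 0 0 C' p (g + l) else 0))"
    (is "even ?e")
  proof (cases "\<not> p < g \<and> q < g")
    case True
    then obtain i where i: "p = g + i" "i < g" using p by (metis less_double_cases)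
    then have "?e = C i q - (if i = l then C k q else 0) - C' i q - (if q = l then C' i k else 0)"
      using True kl by (simp add: block_fun_def)
    then show ?thesis using H[of i q] True i by simp
  qed (use kl in \<open>auto simp: block_fun_def\<close>)
qed

definition unit_fun :: "nat \<Rightarrow> nat \<Rightarrow> nat \<Rightarrow> nat \<Rightarrow> int" where
  "unit_fun k m = (\<lambda>i j. if i = k \<and> j = m then 1 else 0)"

lemma sum_unit_fun_diag: "(\<Sum>i<g. unit_fun l m i i) = (if l = m \<and> l < g then 1 else 0)"
proof (cases "l = m")
  case False
  then have "(\<Sum>i<g. unit_fun l m i i) = 0" unfolding unit_fun_def by (intro sum.neutral) auto
  then show ?thesis using False by simp
qed (simp add: unit_fun_def)

lemma sum_unit_fun:
  assumes "finite F"
  shows "(\<Sum>x\<in>F. f x * unit_fun (fst x) (snd x) i j) = (if (i, j) \<in> F then f (i, j) else 0)"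
proof -
  have "(\<Sum>x\<in>F. f x * unit_fun (fst x) (snd x) i j) = (\<Sum>x\<in>F. if x = (i, j) then f (i, j) else 0)"
    by (rule sum.cong) (auto simp: unit_fun_def)
  then show ?thesis using assms by simp
qed

lemma sum_unit_fun_swap:
  assumes "finite F"
  shows "(\<Sum>x\<in>F. f x * unit_fun (snd x) (fst x) i j) = (if (j, i) \<in> F then f (j, i) else 0)"
proof -
  have "(\<Sum>x\<in>F. f x * unit_fun (snd x) (fst x) i j) = (\<Sum>x\<in>F. if x = (j, i) then f (j, i) else 0)"
    by (rule sum.cong) (auto simp: unit_fun_def)
  then show ?thesis using assms by simp
qed

lemma sum_unit_fun_diag_pair:
  assumes "finite F"
  shows "(\<Sum>k\<in>F. f k * (unit_fun k k i j + unit_fun 0 0 i j))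
    = (if i = j \<and> i \<in> F then f i else 0) + (if i = 0 \<and> j = 0 then sum f F else 0)"
proof -
  have "(\<Sum>k\<in>F. f k * unit_fun k k i j) = (\<Sum>k\<in>F. if k = i then (if i = j then f i else 0) else 0)"
    by (rule sum.cong) (auto simp: unit_fun_def)
  then show ?thesis using assms by (simp add: distrib_left sum.distrib unit_fun_def)
qed

text \<open>Each generator is \<open>n' n\<close> with \<open>n' = x n x\<inverse>\<close> for a transvection \<open>x\<close>. The auxiliary index
  \<open>l\<close> keeps \<open>n\<close> inside \<open>Y\<close> while conjugation by \<open>x\<close> contributes the wanted matrix unit;
  this is where \<open>g \<ge> 3\<close> is needed.\<close>

lemma level2_unit_a_block_in_Y4_commutators:
  assumes "k < g" "m < g" "l < g" "k \<noteq> m" "k \<noteq> l" "l \<noteq> m"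
  shows "level2_mat g (block_fun g (unit_fun k m) 0 0) \<in> Y4_commutators g"
proof -
  have "level2_mat g (block_fun g (unit_fun k m) 0 0)
      = level2_mat g (block_fun g ((unit_fun l m + unit_fun k m) + unit_fun l m) (0 + 0) (0 + 0))"
    by (rule level2_block_cong) (auto simp: unit_fun_def)
  also have "\<dots> \<in> Y4_commutators g"
  proof (rule level2_block_in_Y4_commutators[where x = "transvection g k l"])
    show "Y4_cond g (unit_fun l m) 0 0" "Y4_cond g (unit_fun l m + unit_fun k m) 0 0"
      using assms by (auto simp: Y4_cond_def sum.distrib sum_unit_fun_diag)
    show "transvection g k l \<in> Sp4 g" using assms by (intro transvection_in_Sp4) auto
    show "transvection g k l * level2_mat g (block_fun g (unit_fun l m) 0 0)
        = level2_mat g (block_fun g (unit_fun l m + unit_fun k m) 0 0) * transvection g k l"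
      using assms by (intro transvection_conj) (auto simp: block_fun_def unit_fun_def)
  qed
  finally show ?thesis .
qed

lemma level2_unit_b_block_in_Y4_commutators:
  assumes "k < g" "m < g" "l < g" "k \<noteq> m" "k \<noteq> l" "l \<noteq> m"
  shows "level2_mat g (block_fun g 0 (unit_fun k m + unit_fun m k) 0) \<in> Y4_commutators g"
proof -
  let ?b = "unit_fun l m + unit_fun m l"
  have "level2_mat g (block_fun g 0 (unit_fun k m + unit_fun m k) 0)
      = level2_mat g (block_fun g (0 + 0) ((?b + (unit_fun k m + unit_fun m k)) + ?b) (0 + 0))"
    by (rule level2_block_cong) (auto simp: unit_fun_def)
  also have "\<dots> \<in> Y4_commutators g"
  proof (rule level2_block_in_Y4_commutators[where x = "transvection g k l"])
    show "Y4_cond g 0 ?b 0" "Y4_cond g 0 (?b + (unit_fun k m + unit_fun m k)) 0"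
      using assms by (auto simp: Y4_cond_def unit_fun_def)
    show "transvection g k l \<in> Sp4 g" using assms by (intro transvection_in_Sp4) auto
    show "transvection g k l * level2_mat g (block_fun g 0 ?b 0)
        = level2_mat g (block_fun g 0 (?b + (unit_fun k m + unit_fun m k)) 0) * transvection g k l"
      using assms by (intro transvection_conj_upper) (auto simp: unit_fun_def)
  qed
  finally show ?thesis .
qed

lemma level2_unit_c_block_in_Y4_commutators:
  assumes "k < g" "m < g" "l < g" "k \<noteq> m" "k \<noteq> l" "l \<noteq> m"
  shows "level2_mat g (block_fun g 0 0 (unit_fun k m + unit_fun m k)) \<in> Y4_commutators g"
proof -
  let ?c = "unit_fun l m + unit_fun m l"
  have "level2_mat g (block_fun g 0 0 (unit_fun k m + unit_fun m k))
      = level2_mat g (block_fun g (0 + 0) (0 + 0) ((?c - (unit_fun k m + unit_fun m k)) + ?c))"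
    by (rule level2_block_cong) (auto simp: unit_fun_def)
  also have "\<dots> \<in> Y4_commutators g"
  proof (rule level2_block_in_Y4_commutators[where x = "transvection g l k"])
    show "Y4_cond g 0 0 ?c" "Y4_cond g 0 0 (?c - (unit_fun k m + unit_fun m k))"
      using assms by (auto simp: Y4_cond_def unit_fun_def)
    show "transvection g l k \<in> Sp4 g" using assms by (intro transvection_in_Sp4) auto
    show "transvection g l k * level2_mat g (block_fun g 0 0 ?c)
        = level2_mat g (block_fun g 0 0 (?c - (unit_fun k m + unit_fun m k))) * transvection g l k"
      using assms by (intro transvection_conj_lower) (auto simp: unit_fun_def)
  qed
  finally show ?thesis .
qed

lemma level2_unit_diag_block_in_Y4_commutators:
  assumes "k < g" "0 < k"
  shows "level2_mat g (block_fun g (unit_fun k k + unit_fun 0 0 + unit_fun k 0) 0 0) \<in> Y4_commutators g"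
proof -
  let ?a = "unit_fun 0 k + unit_fun k k - unit_fun 0 0 - unit_fun k 0"
  have "level2_mat g (block_fun g (unit_fun k k + unit_fun 0 0 + unit_fun k 0) 0 0)
      = level2_mat g (block_fun g (?a + unit_fun 0 k) (0 + 0) (0 + 0))"
    by (rule level2_block_cong) (auto simp: unit_fun_def)
  also have "\<dots> \<in> Y4_commutators g"
  proof (rule level2_block_in_Y4_commutators[where x = "transvection g k 0"])
    show "Y4_cond g (unit_fun 0 k) 0 0" "Y4_cond g ?a 0 0"
      using assms by (auto simp: Y4_cond_def sum.distrib sum_subtractf sum_unit_fun_diag)
    show "transvection g k 0 \<in> Sp4 g" using assms by (intro transvection_in_Sp4) auto
    show "transvection g k 0 * level2_mat g (block_fun g (unit_fun 0 k) 0 0)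
        = level2_mat g (block_fun g ?a 0 0) * transvection g k 0"
      using assms by (intro transvection_conj) (auto simp: block_fun_def unit_fun_def)
  qed
  finally show ?thesis .
qed

section \<open>\<open>Y\<close> is generated by commutators\<close>

abbreviation Y4_commutator_group :: "nat \<Rightarrow> 4 mat set" where
  "Y4_commutator_group g \<equiv> generate (Sp4_group g) (Y4_commutators g)"

lemma level2_block_mult_in_Y4_commutator_group:
  assumes "level2_mat g (block_fun g a b c) \<in> Y4_commutator_group g"
    and "level2_mat g (block_fun g a' b' c') \<in> Y4_commutator_group g"
  shows "level2_mat g (block_fun g (a + a') (b + b') (c + c')) \<in> Y4_commutator_group g"
  using generate.eng[OF assms] by (simp add: Sp4_group_def level2_mat_mult block_fun_add)

lemma level2_block_scaled_add_in_Y4_commutator_group: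
  fixes t :: int
  assumes "level2_mat g (block_fun g a b c) \<in> Y4_commutator_group g"
    and "level2_mat g (block_fun g a' b' c') \<in> Y4_commutator_group g"
  shows "level2_mat g (block_fun g (\<lambda>i j. t * a i j + a' i j) (\<lambda>i j. t * b i j + b' i j)
    (\<lambda>i j. t * c i j + c' i j)) \<in> Y4_commutator_group g"
proof (cases "even t")
  case True
  then have "level2_mat g (block_fun g (\<lambda>i j. t * a i j + a' i j) (\<lambda>i j. t * b i j + b' i j)
      (\<lambda>i j. t * c i j + c' i j)) = level2_mat g (block_fun g a' b' c')"
    by (intro level2_block_cong) auto
  with assms(2) show ?thesis by simp
next
  case False
  have "even (t * x + y - (x + y))" for x y :: int
  proof -
    have "t * x + y - (x + y) = (t - 1) * x" by (simp add: algebra_simps)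
    then show ?thesis using False by simp
  qed
  then have "level2_mat g (block_fun g (\<lambda>i j. t * a i j + a' i j) (\<lambda>i j. t * b i j + b' i j)
      (\<lambda>i j. t * c i j + c' i j)) = level2_mat g (block_fun g (a + a') (b + b') (c + c'))"
    by (intro level2_block_cong) simp
  with level2_block_mult_in_Y4_commutator_group[OF assms] show ?thesis by simp
qed

lemma level2_block_lincomb_in_Y4_commutator_group:
  fixes t :: "'i \<Rightarrow> int"
  assumes "finite F"
    and "\<And>x. x \<in> F \<Longrightarrow> level2_mat g (block_fun g (a x) (b x) (c x)) \<in> Y4_commutator_group g"
  shows "level2_mat g (block_fun g (\<lambda>i j. \<Sum>x\<in>F. t x * a x i j) (\<lambda>i j. \<Sum>x\<in>F. t x * b x i j)
    (\<lambda>i j. \<Sum>x\<in>F. t x * c x i j)) \<in> Y4_commutator_group g"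
  using assms
proof (induction F rule: finite_induct)
  case empty
  have "level2_mat g (block_fun g (\<lambda>i j. 0) (\<lambda>i j. 0) (\<lambda>i j. 0)) = level2_mat g 0"
    by (rule level2_mat_cong) (simp add: block_fun_def)
  then show ?case using generate.one[of "Sp4_group g"] by (simp add: Sp4_group_def level2_mat_zero)
next
  case (insert y F)
  then show ?case
    using level2_block_scaled_add_in_Y4_commutator_group[of g "a y" "b y" "c y", where t = "t y"]
    by simp
qed

lemma third_index:
  fixes k m g :: nat
  assumes "3 \<le> g"
  obtains l where "l < g" "l \<noteq> k" "l \<noteq> m"
proof -
  have "\<exists>l\<in>{0, 1, 2}. l \<noteq> k \<and> l \<noteq> m" by auto
  then obtain l where "l \<in> {0, 1, 2}" "l \<noteq> k" "l \<noteq> m" by blast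
  with assms show ?thesis by (intro that[of l]) auto
qed

lemma level2_unit_diag_pair_block_in_Y4_commutator_group:
  assumes "3 \<le> g" "k < g" "0 < k"
  shows "level2_mat g (block_fun g (unit_fun k k + unit_fun 0 0) 0 0) \<in> Y4_commutator_group g"
proof -
  obtain l where l: "l < g" "l \<noteq> k" "l \<noteq> 0" using third_index[OF assms(1)] by blast
  have "level2_mat g (block_fun g ((unit_fun k k + unit_fun 0 0 + unit_fun k 0) + unit_fun k 0) (0 + 0) (0 + 0))
      \<in> Y4_commutator_group g"
    using assms l
    by (intro level2_block_mult_in_Y4_commutator_group generate.incl
        level2_unit_diag_block_in_Y4_commutators level2_unit_a_block_in_Y4_commutators[of k g 0 l]) auto
  moreover have "level2_mat g (block_fun g (unit_fun k k + unit_fun 0 0) 0 0)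
      = level2_mat g (block_fun g ((unit_fun k k + unit_fun 0 0 + unit_fun k 0) + unit_fun k 0) (0 + 0) (0 + 0))"
    by (rule level2_block_cong) (auto simp: unit_fun_def)
  ultimately show ?thesis by simp
qed

lemma level2_a_block_in_Y4_commutator_group:
  assumes "3 \<le> g" "even (\<Sum>i<g. a i i)"
  shows "level2_mat g (block_fun g a 0 0) \<in> Y4_commutator_group g"
proof -
  define FA where "FA = {x :: nat \<times> nat. fst x < g \<and> snd x < g \<and> fst x \<noteq> snd x}"
  define FD where "FD = {k. 0 < k \<and> k < g}"
  have fin: "finite FA" "finite FD"
    unfolding FA_def FD_def by (auto intro: finite_subset[of _ "{..<g} \<times> {..<g}"])
  let ?SA = "\<lambda>i j. \<Sum>x\<in>FA. a (fst x) (snd x) * unit_fun (fst x) (snd x) i j"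
    and ?ZA = "\<lambda>i j. \<Sum>x\<in>FA. a (fst x) (snd x) * 0 i j"
    and ?SD = "\<lambda>i j. \<Sum>k\<in>FD. a k k * (unit_fun k k + unit_fun 0 0) i j"
    and ?ZD = "\<lambda>i j. \<Sum>k\<in>FD. a k k * 0 i j"
  have "level2_mat g (block_fun g ?SA ?ZA ?ZA) \<in> Y4_commutator_group g"
  proof (rule level2_block_lincomb_in_Y4_commutator_group[OF fin(1)])
    fix x assume "x \<in> FA"
    moreover obtain l where "l < g" "l \<noteq> fst x" "l \<noteq> snd x" using third_index[OF assms(1)] by blast
    ultimately show "level2_mat g (block_fun g (unit_fun (fst x) (snd x)) 0 0) \<in> Y4_commutator_group g"
      unfolding FA_def by (intro generate.incl level2_unit_a_block_in_Y4_commutators) auto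
  qed
  moreover have "level2_mat g (block_fun g ?SD ?ZD ?ZD) \<in> Y4_commutator_group g"
    using assms(1) unfolding FD_def
    by (intro level2_block_lincomb_in_Y4_commutator_group[OF fin(2)[unfolded FD_def]]
        level2_unit_diag_pair_block_in_Y4_commutator_group) auto
  ultimately have "level2_mat g (block_fun g (?SA + ?SD) (?ZA + ?ZD) (?ZA + ?ZD)) \<in> Y4_commutator_group g"
    by (rule level2_block_mult_in_Y4_commutator_group)
  moreover have "level2_mat g (block_fun g a 0 0) = level2_mat g (block_fun g (?SA + ?SD) (?ZA + ?ZD) (?ZA + ?ZD))"
  proof (rule level2_block_cong)
    fix i j assume ij: "i < g" "j < g"
    have "{..<g} = insert 0 FD" "0 \<notin> FD" using assms(1) unfolding FD_def by auto
    then have "(\<Sum>i<g. a i i) = a 0 0 + (\<Sum>k\<in>FD. a k k)" using fin(2) by simp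
    \<comment> \<open>the \<open>(0, 0)\<close> entry collects all \<open>a k k\<close> with \<open>k > 0\<close>; the trace condition makes it right\<close>
    then have "even (a 0 0 - (\<Sum>k\<in>FD. a k k))"
      using assms(2) by (metis add_diff_cancel_left' even_add even_diff)
    moreover have "(?SA + ?SD) i j = (if (i, j) \<in> FA then a i j else 0)
        + ((if i = j \<and> i \<in> FD then a i i else 0) + (if i = 0 \<and> j = 0 then (\<Sum>k\<in>FD. a k k) else 0))"
      by (simp add: sum_unit_fun[OF fin(1)] sum_unit_fun_diag_pair[OF fin(2)])
    ultimately show "even (a i j - (?SA + ?SD) i j) \<and> even (0 i j - (?ZA + ?ZD) i j) \<and> even (0 i j - (?ZA + ?ZD) i j)"
      using ij by (auto simp: FA_def FD_def)
  qed
  ultimately show ?thesis by simp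
qed

definition upper_pairs :: "nat \<Rightarrow> (nat \<times> nat) set" where
  "upper_pairs g = {x. fst x < snd x \<and> snd x < g}"

lemma finite_upper_pairs: "finite (upper_pairs g)"
  unfolding upper_pairs_def by (auto intro: finite_subset[of _ "{..<g} \<times> {..<g}"])

lemma symmetric_lincomb_cong:
  assumes "i < g" "j < g" "even (b i j - b j i)" "even (b i i)"
  shows "even (b i j - (\<Sum>x\<in>upper_pairs g. b (fst x) (snd x)
    * (unit_fun (fst x) (snd x) + unit_fun (snd x) (fst x)) i j))"
proof -
  have "(\<Sum>x\<in>upper_pairs g. b (fst x) (snd x) * (unit_fun (fst x) (snd x) + unit_fun (snd x) (fst x)) i j)
      = (if (i, j) \<in> upper_pairs g then b i j else 0) + (if (j, i) \<in> upper_pairs g then b j i else 0)"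
    by (simp add: distrib_left sum.distrib sum_unit_fun[OF finite_upper_pairs]
        sum_unit_fun_swap[OF finite_upper_pairs])
  with assms show ?thesis
    by (cases i j rule: linorder_cases) (auto simp: upper_pairs_def)
qed

lemma level2_b_block_in_Y4_commutator_group:
  assumes "3 \<le> g" "\<And>i j. i < g \<Longrightarrow> j < g \<Longrightarrow> even (b i j - b j i)" "\<And>i. i < g \<Longrightarrow> even (b i i)"
  shows "level2_mat g (block_fun g 0 b 0) \<in> Y4_commutator_group g"
proof -
  let ?U = "\<lambda>x. unit_fun (fst x) (snd x) + unit_fun (snd x) (fst x)"
  let ?S = "\<lambda>i j. \<Sum>x\<in>upper_pairs g. b (fst x) (snd x) * ?U x i j"
    and ?Z = "\<lambda>i j. \<Sum>x\<in>upper_pairs g. b (fst x) (snd x) * 0 i j"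
  have "level2_mat g (block_fun g 0 b 0) = level2_mat g (block_fun g ?Z ?S ?Z)"
  proof (rule level2_block_cong)
    fix i j assume ij: "i < g" "j < g"
    show "even (0 i j - ?Z i j) \<and> even (b i j - ?S i j) \<and> even (0 i j - ?Z i j)"
      using symmetric_lincomb_cong[OF ij assms(2)[OF ij] assms(3)[OF ij(1)]] by simp
  qed
  also have "\<dots> \<in> Y4_commutator_group g"
  proof (rule level2_block_lincomb_in_Y4_commutator_group[OF finite_upper_pairs])
    fix x assume "x \<in> upper_pairs g"
    moreover obtain l where "l < g" "l \<noteq> fst x" "l \<noteq> snd x" using third_index[OF assms(1)] by blast
    ultimately show "level2_mat g (block_fun g 0 (?U x) 0) \<in> Y4_commutator_group g"
      unfolding upper_pairs_def by (intro generate.incl level2_unit_b_block_in_Y4_commutators) auto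
  qed
  finally show ?thesis .
qed

lemma level2_c_block_in_Y4_commutator_group:
  assumes "3 \<le> g" "\<And>i j. i < g \<Longrightarrow> j < g \<Longrightarrow> even (c i j - c j i)" "\<And>i. i < g \<Longrightarrow> even (c i i)"
  shows "level2_mat g (block_fun g 0 0 c) \<in> Y4_commutator_group g"
proof -
  let ?U = "\<lambda>x. unit_fun (fst x) (snd x) + unit_fun (snd x) (fst x)"
  let ?S = "\<lambda>i j. \<Sum>x\<in>upper_pairs g. c (fst x) (snd x) * ?U x i j"
    and ?Z = "\<lambda>i j. \<Sum>x\<in>upper_pairs g. c (fst x) (snd x) * 0 i j"
  have "level2_mat g (block_fun g 0 0 c) = level2_mat g (block_fun g ?Z ?Z ?S)"
  proof (rule level2_block_cong)
    fix i j assume ij: "i < g" "j < g"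
    show "even (0 i j - ?Z i j) \<and> even (0 i j - ?Z i j) \<and> even (c i j - ?S i j)"
      using symmetric_lincomb_cong[OF ij assms(2)[OF ij] assms(3)[OF ij(1)]] by simp
  qed
  also have "\<dots> \<in> Y4_commutator_group g"
  proof (rule level2_block_lincomb_in_Y4_commutator_group[OF finite_upper_pairs])
    fix x assume "x \<in> upper_pairs g"
    moreover obtain l where "l < g" "l \<noteq> fst x" "l \<noteq> snd x" using third_index[OF assms(1)] by blast
    ultimately show "level2_mat g (block_fun g 0 0 (?U x)) \<in> Y4_commutator_group g"
      unfolding upper_pairs_def by (intro generate.incl level2_unit_c_block_in_Y4_commutators) auto
  qed
  finally show ?thesis .
qed

lemma Y4_subset_Y4_commutator_group:
  assumes "3 \<le> g"
  shows "Y4 g \<subseteq> Y4_commutator_group g"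
proof
  fix X assume "X \<in> Y4 g"
  then obtain a b c where Y: "Y4_cond g a b c" and X: "X = level2_mat g (block_fun g a b c)"
    by (rule Y4_level2_blockE)
  have "level2_mat g (block_fun g (a + 0 + 0) (0 + b + 0) (0 + 0 + c)) \<in> Y4_commutator_group g"
    using Y assms unfolding Y4_cond_def
    by (intro level2_block_mult_in_Y4_commutator_group level2_a_block_in_Y4_commutator_group
        level2_b_block_in_Y4_commutator_group level2_c_block_in_Y4_commutator_group) auto
  then show "X \<in> Y4_commutator_group g" by (simp add: X)
qed

theorem corollary6p6:
  fixes g :: nat
  assumes "g \<ge> 3"
  shows "\<forall>f1 f2 :: 4 mat set \<Rightarrow> 4 mat set \<Rightarrow> 'a::ab_group_add.
           cocycle2 (frakH g) f1 \<longrightarrow> cocycle2 (frakH g) f2 \<longrightarrow>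
           cohomologous2 (Sp4_group g) (inflation2 (Sp4_group g) (Y4 g) f1)
                                       (inflation2 (Sp4_group g) (Y4 g) f2) \<longrightarrow>
           cohomologous2 (frakH g) f1 f2"
  unfolding frakH_def
  using inflation2_cohomologous_imp_cohomologous[OF group_Sp4_group subgroup_Y4
      Y4_subset_Y4_commutator_group[OF assms]]
  by blast

end
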